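(* Let $d\ge 1$ be an integer, let $P\subseteq \mathbb R\times[d]$, and let $\mathcal C_{\equiv}(P)$ be as in the context. For any finite family $\mathcal C\subseteq \mathcal C_{\equiv}(P)$, the nerve of $\mathcal C$ is $(2d-1)$-collapsible.
   Context: $[d]=\{1,\dots,d\}$. A (separated) $d$-interval is a set $I=\bigcup_{i\in[d]}\{(x,i)\in\mathbb R\times[d]: x\in I^{(i)}\}$, where each $I^{(i)}\subseteq\mathbb R$ is a convex set (possibly empty), called the $i$-th level of $I$. For $P\subseteq\mathbb R\times[d]$, $\mathcal C_{\equiv}(P)=\{I\cap P: I\subseteq\mathbb R\times[d]\text{ is a } d\text{-interval}\}$. For a family $\mathcal F=(C_i)_{i\in I}$ of sets indexed by a finite set $I$, its nerve is the abstract simplicial complex $K(\mathcal F)=\{J\subseteq I: \bigcap_{j\in J}C_j\neq\emptyset\}$. The dimension of a face $\alpha$ is $|\alpha|-1$. A face $\sigma$ of a simplicial complex $K$ is free if it is contained in a unique inclusion-maximal face of $K$. An elementary $d$-collapse removes from $K$ a free face $\sigma$ with $\dim\sigma\le d-1$ together with all faces containing it, giving $\mathrm{coll}(K,\sigma)=K\setminus\{\tau\in K:\sigma\subseteq\tau\}$. $K$ is $d$-collapsible if it can be reduced to the empty complex by a sequence of elementary $d$-collapses. *)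

theory Defs
  imports "HOL-Analysis.Analysis"
begin

text \<open>Points of R x [d] are pairs (x, i) :: real \<times> nat with level i in {1..d}.\<close>

definition d_interval :: "nat \<Rightarrow> (real \<times> nat) set \<Rightarrow> bool" where
  "d_interval d I \<longleftrightarrow> I \<subseteq> UNIV \<times> {1..d} \<and> (\<forall>i\<in>{1..d}. convex {x. (x, i) \<in> I})"

definition C_equiv :: "nat \<Rightarrow> (real \<times> nat) set \<Rightarrow> (real \<times> nat) set set" where
  "C_equiv d P = {I \<inter> P | I. d_interval d I}"

definition nerve :: "'i set \<Rightarrow> ('i \<Rightarrow> 'a set) \<Rightarrow> 'i set set" where
  "nerve Ix F = {J. J \<subseteq> Ix \<and> (\<Inter>j\<in>J. F j) \<noteq> {}}"

definition maximal_face :: "'a set set \<Rightarrow> 'a set \<Rightarrow> bool" where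
  "maximal_face K \<tau> \<longleftrightarrow> \<tau> \<in> K \<and> (\<forall>\<rho>\<in>K. \<tau> \<subseteq> \<rho> \<longrightarrow> \<rho> = \<tau>)"

definition free_face :: "'a set set \<Rightarrow> 'a set \<Rightarrow> bool" where
  "free_face K \<sigma> \<longleftrightarrow> \<sigma> \<in> K \<and> (\<exists>!\<tau>. maximal_face K \<tau> \<and> \<sigma> \<subseteq> \<tau>)"

definition coll :: "'a set set \<Rightarrow> 'a set \<Rightarrow> 'a set set" where
  "coll K \<sigma> = K - {\<tau> \<in> K. \<sigma> \<subseteq> \<tau>}"

text \<open>d-collapsible: reducible to the empty complex by elementary d-collapses,
  i.e. removals of free faces of dimension \<le> d-1, i.e. of cardinality \<le> d.\<close>
inductive collapsible :: "nat \<Rightarrow> 'a set set \<Rightarrow> bool" for d :: nat where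
  empty: "collapsible d {}"
| step: "\<lbrakk>free_face K \<sigma>; finite \<sigma>; card \<sigma> \<le> d; collapsible d (coll K \<sigma>)\<rbrakk>
           \<Longrightarrow> collapsible d K"

end

theory Submission
  imports Defs
begin

(* With finitely many members, P can be cut down to a finite set of witness points; every
   member is then a finite set that is convex relative to P on each level, and we induct on
   the total number of points. Pick a level j that occurs and, among the members meeting it,
   one, A, whose level-j part has the leftmost right end r; delete the leftmost point q of A
   on level j. If A has another point on level j, every face whose intersection contains q
   also contains (r, j), so the nerve does not change. Otherwise the faces that disappear are
   those containing A in which, on each of the d - 1 other levels, two members have disjoint
   parts (Helly's theorem on the line). They all lie in the simplex of the members containing
   q, and peeling off one vertex at a time removes them by collapses of faces made of A and at
   most two witnesses per level, i.e. of at most 2d - 1 vertices. *)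

definition elementary_collapse :: "nat \<Rightarrow> 'a set set \<Rightarrow> 'a set set \<Rightarrow> bool" where
  "elementary_collapse k K K' \<longleftrightarrow>
     (\<exists>\<sigma>. free_face K \<sigma> \<and> finite \<sigma> \<and> card \<sigma> \<le> k \<and> K' = coll K \<sigma>)"

abbreviation collapses_to :: "nat \<Rightarrow> 'a set set \<Rightarrow> 'a set set \<Rightarrow> bool" where
  "collapses_to k \<equiv> (elementary_collapse k)\<^sup>*\<^sup>*"

lemma collapsible_if_collapses_to:
  assumes "collapses_to k K K'" and "collapsible k K'"
  shows "collapsible k K"
  using assms
  by (induction rule: converse_rtranclp_induct)
    (auto simp: elementary_collapse_def intro: collapsible.step)

lemma collapsible_empty_face: "collapsible k {{}}"
proof (rule collapsible.step)
  show "free_face {{}} {}"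
    by (auto simp: free_face_def maximal_face_def)
qed (auto simp: coll_def intro: collapsible.empty)

lemma elementary_collapse_simplex_star:
  assumes "\<sigma> \<subseteq> \<Delta>" "finite \<sigma>" "card \<sigma> \<le> k"
    and star: "{\<tau>\<in>K. \<sigma> \<subseteq> \<tau>} = {\<tau>. \<sigma> \<subseteq> \<tau> \<and> \<tau> \<subseteq> \<Delta>}"
  shows "elementary_collapse k K (K - {\<tau>\<in>K. \<sigma> \<subseteq> \<tau>})"
proof -
  have star_iff: "\<tau> \<in> K \<and> \<sigma> \<subseteq> \<tau> \<longleftrightarrow> \<sigma> \<subseteq> \<tau> \<and> \<tau> \<subseteq> \<Delta>" for \<tau>
    using star by (simp add: set_eq_iff)
  have "\<sigma> \<in> K" "\<Delta> \<in> K"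
    using star_iff[of \<sigma>] star_iff[of \<Delta>] assms(1) by simp_all
  have maximal_iff: "maximal_face K \<tau> \<and> \<sigma> \<subseteq> \<tau> \<longleftrightarrow> \<tau> = \<Delta>" for \<tau>
  proof
    assume "maximal_face K \<tau> \<and> \<sigma> \<subseteq> \<tau>"
    then show "\<tau> = \<Delta>"
      using star_iff[of \<tau>] \<open>\<Delta> \<in> K\<close> unfolding maximal_face_def by auto
  next
    have "\<rho> = \<Delta>" if "\<rho> \<in> K" "\<Delta> \<subseteq> \<rho>" for \<rho>
      using star_iff[of \<rho>] that assms(1) by auto
    moreover assume "\<tau> = \<Delta>"
    ultimately show "maximal_face K \<tau> \<and> \<sigma> \<subseteq> \<tau>"
      using \<open>\<Delta> \<in> K\<close> assms(1) unfolding maximal_face_def by auto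
  qed
  have "free_face K \<sigma>"
    unfolding free_face_def using \<open>\<sigma> \<in> K\<close> maximal_iff by simp
  then show ?thesis
    using assms(2,3) by (auto simp: elementary_collapse_def coll_def)
qed

definition meets_and_separates ::
    "'a set list \<Rightarrow> (('a \<Rightarrow> 'b::linorder) \<times> ('a \<Rightarrow> 'b)) list \<Rightarrow> 'a set \<Rightarrow> bool" where
  "meets_and_separates Ts Ps \<tau> \<longleftrightarrow>
     (\<forall>T\<in>set Ts. \<tau> \<inter> T \<noteq> {}) \<and> (\<forall>(lo, hi)\<in>set Ps. \<exists>a\<in>\<tau>. \<exists>b\<in>\<tau>. hi b < lo a)"

(* The faces through c are removed first; the remaining ones lie in the simplex on \<Delta> - {c}. *)
lemma collapses_to_peel_vertex:
  assumes in_simplex: "{\<tau>\<in>K. \<sigma> \<subseteq> \<tau> \<and> M \<tau>} = {\<tau>. \<sigma> \<subseteq> \<tau> \<and> \<tau> \<subseteq> \<Delta> \<and> M \<tau>}"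
    and M'_imp_M: "\<And>\<tau>. c \<in> \<tau> \<Longrightarrow> M' \<tau> \<Longrightarrow> M \<tau>"
    and M_imp_M': "\<And>\<tau>. \<tau> \<subseteq> \<Delta> \<Longrightarrow> c \<in> \<tau> \<Longrightarrow> M \<tau> \<Longrightarrow> M' \<tau>"
    and with_c: "{\<tau>\<in>K. insert c \<sigma> \<subseteq> \<tau> \<and> M' \<tau>} = {\<tau>. insert c \<sigma> \<subseteq> \<tau> \<and> \<tau> \<subseteq> \<Delta> \<and> M' \<tau>}
      \<Longrightarrow> collapses_to k K (K - {\<tau>\<in>K. insert c \<sigma> \<subseteq> \<tau> \<and> M' \<tau>})"
    and without_c: "\<And>K'. {\<tau>\<in>K'. \<sigma> \<subseteq> \<tau> \<and> M \<tau>} = {\<tau>. \<sigma> \<subseteq> \<tau> \<and> \<tau> \<subseteq> \<Delta> - {c} \<and> M \<tau>}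
      \<Longrightarrow> collapses_to k K' (K' - {\<tau>\<in>K'. \<sigma> \<subseteq> \<tau> \<and> M \<tau>})"
  shows "collapses_to k K (K - {\<tau>\<in>K. \<sigma> \<subseteq> \<tau> \<and> M \<tau>})"
proof -
  have in_simplex_iff: "\<tau> \<in> K \<and> \<sigma> \<subseteq> \<tau> \<and> M \<tau> \<longleftrightarrow> \<sigma> \<subseteq> \<tau> \<and> \<tau> \<subseteq> \<Delta> \<and> M \<tau>" for \<tau>
    using in_simplex by (simp add: set_eq_iff)
  define R where "R = {\<tau>\<in>K. insert c \<sigma> \<subseteq> \<tau> \<and> M' \<tau>}"
  have "R = {\<tau>. insert c \<sigma> \<subseteq> \<tau> \<and> \<tau> \<subseteq> \<Delta> \<and> M' \<tau>}"
    using in_simplex_iff M'_imp_M unfolding R_def by blast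
  then have first: "collapses_to k K (K - R)"
    using with_c unfolding R_def by blast
  have "\<tau> \<in> K - R \<and> \<sigma> \<subseteq> \<tau> \<and> M \<tau> \<longleftrightarrow> \<sigma> \<subseteq> \<tau> \<and> \<tau> \<subseteq> \<Delta> - {c} \<and> M \<tau>" for \<tau>
  proof
    assume \<tau>: "\<tau> \<in> K - R \<and> \<sigma> \<subseteq> \<tau> \<and> M \<tau>"
    then have "\<tau> \<subseteq> \<Delta>"
      using in_simplex_iff by blast
    moreover have "c \<notin> \<tau>"
      using \<tau> M_imp_M'[OF \<open>\<tau> \<subseteq> \<Delta>\<close>] unfolding R_def by blast
    ultimately show "\<sigma> \<subseteq> \<tau> \<and> \<tau> \<subseteq> \<Delta> - {c} \<and> M \<tau>"
      using \<tau> by blast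
  next
    assume "\<sigma> \<subseteq> \<tau> \<and> \<tau> \<subseteq> \<Delta> - {c} \<and> M \<tau>"
    then show "\<tau> \<in> K - R \<and> \<sigma> \<subseteq> \<tau> \<and> M \<tau>"
      using in_simplex_iff[of \<tau>] unfolding R_def by blast
  qed
  then have "{\<tau>\<in>K - R. \<sigma> \<subseteq> \<tau> \<and> M \<tau>} = {\<tau>. \<sigma> \<subseteq> \<tau> \<and> \<tau> \<subseteq> \<Delta> - {c} \<and> M \<tau>}"
    by blast
  then have "collapses_to k (K - R) (K - R - {\<tau>\<in>K - R. \<sigma> \<subseteq> \<tau> \<and> M \<tau>})"
    by (rule without_c)
  moreover have "K - R - {\<tau>\<in>K - R. \<sigma> \<subseteq> \<tau> \<and> M \<tau>} = K - {\<tau>\<in>K. \<sigma> \<subseteq> \<tau> \<and> M \<tau>}"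
    using M'_imp_M unfolding R_def by blast
  ultimately show ?thesis
    using rtranclp_trans[OF first] by simp
qed

(* Choosing c with the least hi, a pair separated inside a face through c is also separated
   by c itself and some a with hi c < lo a; so one pair is traded for one set to meet. *)
lemma meets_and_separates_reduce:
  fixes Ps :: "(('a \<Rightarrow> 'b::linorder) \<times> ('a \<Rightarrow> 'b)) list"
  assumes "finite \<Delta>" "\<tau>0 \<subseteq> \<Delta>" "meets_and_separates Ts Ps \<tau>0" "Ts \<noteq> [] \<or> Ps \<noteq> []"
  obtains c Ts' and Ps' :: "(('a \<Rightarrow> 'b) \<times> ('a \<Rightarrow> 'b)) list"
  where "c \<in> \<Delta>" "length Ts' + 2 * length Ps' + 1 = length Ts + 2 * length Ps"
    "\<And>\<tau>. c \<in> \<tau> \<Longrightarrow> meets_and_separates Ts' Ps' \<tau> \<Longrightarrow> meets_and_separates Ts Ps \<tau>"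
    "\<And>\<tau>. \<tau> \<subseteq> \<Delta> \<Longrightarrow> c \<in> \<tau> \<Longrightarrow> meets_and_separates Ts Ps \<tau> \<Longrightarrow> meets_and_separates Ts' Ps' \<tau>"
proof (cases Ts)
  case (Cons T Ts')
  then obtain c where "c \<in> T" "c \<in> \<Delta>"
    using assms(2,3) by (auto simp: meets_and_separates_def)
  then show ?thesis
    using Cons by (intro that[of c Ts' Ps]) (auto simp: meets_and_separates_def)
next
  case Nil
  then obtain lo hi Ps' where Ps: "Ps = (lo, hi) # Ps'"
    using assms(4) by (metis list.exhaust surj_pair)
  then have "\<Delta> \<noteq> {}"
    using assms(2,3) by (auto simp: meets_and_separates_def)
  then obtain c where "c \<in> \<Delta>" and "hi c = Min (hi ` \<Delta>)"
    using obtains_MIN[OF assms(1)] by metis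
  then have c_min: "hi c \<le> hi b" if "b \<in> \<Delta>" for b
    using assms(1) that by simp
  define T where "T = {a. hi c < lo a}"
  show ?thesis
  proof (rule that[of c "[T]" Ps'])
    show "meets_and_separates Ts Ps \<tau>" if "c \<in> \<tau>" "meets_and_separates [T] Ps' \<tau>" for \<tau>
      using that Nil Ps unfolding T_def by (auto simp: meets_and_separates_def)
    show "meets_and_separates [T] Ps' \<tau>"
      if \<tau>: "\<tau> \<subseteq> \<Delta>" "c \<in> \<tau>" "meets_and_separates Ts Ps \<tau>" for \<tau>
    proof -
      obtain a b where "a \<in> \<tau>" "b \<in> \<tau>" "hi b < lo a"
        using \<tau>(3) Ps by (auto simp: meets_and_separates_def)
      then have "a \<in> \<tau> \<inter> T"
        using c_min[of b] \<tau>(1) unfolding T_def by fastforce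
      then show ?thesis
        using \<tau>(3) Ps by (auto simp: meets_and_separates_def)
    qed
  qed (use \<open>c \<in> \<Delta>\<close> Nil Ps in auto)
qed

lemma collapses_to_Diff_meets_and_separates:
  fixes Ps :: "(('a \<Rightarrow> 'b::linorder) \<times> ('a \<Rightarrow> 'b)) list"
  assumes "finite \<Delta>" "finite \<sigma>" "card \<sigma> + length Ts + 2 * length Ps \<le> k"
    and "{\<tau>\<in>K. \<sigma> \<subseteq> \<tau> \<and> meets_and_separates Ts Ps \<tau>} =
         {\<tau>. \<sigma> \<subseteq> \<tau> \<and> \<tau> \<subseteq> \<Delta> \<and> meets_and_separates Ts Ps \<tau>}"
  shows "collapses_to k K (K - {\<tau>\<in>K. \<sigma> \<subseteq> \<tau> \<and> meets_and_separates Ts Ps \<tau>})"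
  using assms
proof (induction "(length Ts + 2 * length Ps) * (card \<Delta> + 1) + card \<Delta>"
    arbitrary: K \<sigma> Ts Ps \<Delta> rule: less_induct)
  case less
  let ?M = "meets_and_separates Ts Ps"
  have in_simplex_iff: "\<tau> \<in> K \<and> \<sigma> \<subseteq> \<tau> \<and> ?M \<tau> \<longleftrightarrow> \<sigma> \<subseteq> \<tau> \<and> \<tau> \<subseteq> \<Delta> \<and> ?M \<tau>" for \<tau>
    using less.prems(4) by (simp add: set_eq_iff)
  consider (none) "\<And>\<tau>. \<sigma> \<subseteq> \<tau> \<Longrightarrow> \<tau> \<subseteq> \<Delta> \<Longrightarrow> \<not> ?M \<tau>"
    | (star) "\<sigma> \<subseteq> \<Delta>" "Ts = []" "Ps = []"
    | (reduce) \<tau>0 where "\<sigma> \<subseteq> \<tau>0" "\<tau>0 \<subseteq> \<Delta>" "?M \<tau>0" "Ts \<noteq> [] \<or> Ps \<noteq> []"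
    by blast
  then show ?case
  proof cases
    case none
    then have "{\<tau>\<in>K. \<sigma> \<subseteq> \<tau> \<and> ?M \<tau>} = {}"
      using in_simplex_iff by blast
    then show ?thesis
      by (metis Diff_empty rtranclp.rtrancl_refl)
  next
    case star
    then have "elementary_collapse k K (K - {\<tau>\<in>K. \<sigma> \<subseteq> \<tau>})"
      using in_simplex_iff less.prems(2,3)
      by (intro elementary_collapse_simplex_star) (auto simp: meets_and_separates_def)
    then show ?thesis
      using star by (simp add: meets_and_separates_def)
  next
    case reduce
    obtain c Ts' and Ps' :: "(('a \<Rightarrow> 'b) \<times> ('a \<Rightarrow> 'b)) list" where c: "c \<in> \<Delta>" and
      length: "length Ts' + 2 * length Ps' + 1 = length Ts + 2 * length Ps"
      and to_M: "\<And>\<tau>. c \<in> \<tau> \<Longrightarrow> meets_and_separates Ts' Ps' \<tau> \<Longrightarrow> ?M \<tau>"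
      and from_M: "\<And>\<tau>. \<tau> \<subseteq> \<Delta> \<Longrightarrow> c \<in> \<tau> \<Longrightarrow> ?M \<tau> \<Longrightarrow> meets_and_separates Ts' Ps' \<tau>"
      using meets_and_separates_reduce[OF less.prems(1) reduce(2-4)] by blast
    have measure_less: "(length Ts' + 2 * length Ps') * (card \<Delta> + 1) + card \<Delta>
        < (length Ts + 2 * length Ps) * (card \<Delta> + 1) + card \<Delta>"
      unfolding length[symmetric] by (simp add: algebra_simps)
    show ?thesis
    proof (rule collapses_to_peel_vertex[OF less.prems(4) to_M from_M])
      show "collapses_to k K (K - {\<tau>\<in>K. insert c \<sigma> \<subseteq> \<tau> \<and> meets_and_separates Ts' Ps' \<tau>})"
        if "{\<tau>\<in>K. insert c \<sigma> \<subseteq> \<tau> \<and> meets_and_separates Ts' Ps' \<tau>} =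
            {\<tau>. insert c \<sigma> \<subseteq> \<tau> \<and> \<tau> \<subseteq> \<Delta> \<and> meets_and_separates Ts' Ps' \<tau>}"
        using less.prems(2,3) length
        by (intro less.hyps[OF measure_less less.prems(1) _ _ that]) (auto simp: card_insert_if)
      show "collapses_to k K' (K' - {\<tau>\<in>K'. \<sigma> \<subseteq> \<tau> \<and> ?M \<tau>})"
        if "{\<tau>\<in>K'. \<sigma> \<subseteq> \<tau> \<and> ?M \<tau>} = {\<tau>. \<sigma> \<subseteq> \<tau> \<and> \<tau> \<subseteq> \<Delta> - {c} \<and> ?M \<tau>}" for K'
      proof (rule less.hyps[OF _ _ less.prems(2,3) that])
        have "card (\<Delta> - {c}) < card \<Delta>"
          using less.prems(1) c by (rule card_Diff1_less)
        then show "(length Ts + 2 * length Ps) * (card (\<Delta> - {c}) + 1) + card (\<Delta> - {c})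
            < (length Ts + 2 * length Ps) * (card \<Delta> + 1) + card \<Delta>"
          by (intro add_le_less_mono mult_le_mono2) auto
      qed (use less.prems(1) in simp)
    qed
  qed
qed

definition level :: "nat \<Rightarrow> (real \<times> nat) set \<Rightarrow> real set" where
  "level l S = {x. (x, l) \<in> S}"

(* An empty level gets left end 1 and right end 0, so that it is separated from itself. *)
definition left_end :: "nat \<Rightarrow> (real \<times> nat) set \<Rightarrow> real" where
  "left_end l S = (if level l S = {} then 1 else Min (level l S))"

definition right_end :: "nat \<Rightarrow> (real \<times> nat) set \<Rightarrow> real" where
  "right_end l S = (if level l S = {} then 0 else Max (level l S))"

definition level_convex :: "(real \<times> nat) set \<Rightarrow> (real \<times> nat) set \<Rightarrow> bool" where
  "level_convex P S \<longleftrightarrow> S \<subseteq> P \<and>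
     (\<forall>x y z l. (x, l) \<in> S \<longrightarrow> (z, l) \<in> S \<longrightarrow> (y, l) \<in> P \<longrightarrow> x \<le> y \<longrightarrow> y \<le> z \<longrightarrow> (y, l) \<in> S)"

lemma level_convexD:
  assumes "level_convex P S" "(x, l) \<in> S" "(z, l) \<in> S" "(y, l) \<in> P" "x \<le> y" "y \<le> z"
  shows "(y, l) \<in> S"
  using assms unfolding level_convex_def by blast

lemma level_convex_subset: "level_convex P S \<Longrightarrow> S \<subseteq> P"
  by (simp add: level_convex_def)

lemma level_convex_finite: "finite P \<Longrightarrow> level_convex P S \<Longrightarrow> finite S"
  using level_convex_subset finite_subset by metis

lemma C_equiv_level_convex:
  assumes "P \<subseteq> UNIV \<times> {1..d}" and "C \<in> C_equiv d P"
  shows "level_convex P C"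
proof -
  obtain I where C: "C = I \<inter> P" and I: "d_interval d I"
    using assms(2) unfolding C_equiv_def by blast
  have "(y, l) \<in> I" if "(x, l) \<in> I" "(z, l) \<in> I" "l \<in> {1..d}" "x \<le> y" "y \<le> z" for x y z l
  proof -
    have "is_interval {x. (x, l) \<in> I}"
      using I that(3) is_interval_convex_1 unfolding d_interval_def by blast
    then show ?thesis
      using that unfolding is_interval_1 by blast
  qed
  then show ?thesis
    using assms(1) unfolding C level_convex_def by blast
qed

lemma level_convex_Int: "level_convex P S \<Longrightarrow> level_convex (P \<inter> W) (S \<inter> W)"
  unfolding level_convex_def by blast

lemma level_convex_Diff_leftmost:
  assumes "level_convex P S" and "\<And>x. (x, j) \<in> S \<Longrightarrow> x0 \<le> x"
  shows "level_convex P (S - {(x0, j)})"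
proof -
  have "(y, l) \<noteq> (x0, j)" if "(x, l) \<in> S - {(x0, j)}" "x \<le> y" for x y l
    using that assms(2)[of x] by force
  then show ?thesis
    using assms(1) unfolding level_convex_def by blast
qed

lemma finite_level: "finite S \<Longrightarrow> finite (level l S)"
proof -
  assume "finite S"
  then have "finite ((\<lambda>x. (x, l)) -` S)"
    by (rule finite_vimageI) (simp add: inj_on_def)
  then show ?thesis
    by (simp add: level_def vimage_def)
qed

lemma level_ends:
  assumes "finite S" and "(x, l) \<in> S"
  shows "(left_end l S, l) \<in> S" "(right_end l S, l) \<in> S" "left_end l S \<le> x" "x \<le> right_end l S"
proof -
  have "x \<in> level l S" "finite (level l S)"
    using assms finite_level[OF assms(1), of l] by (simp_all add: level_def)
  then have "left_end l S \<in> level l S" "right_end l S \<in> level l S"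
    "left_end l S \<le> x" "x \<le> right_end l S"
    by (auto simp: left_end_def right_end_def)
  then show "(left_end l S, l) \<in> S" "(right_end l S, l) \<in> S" "left_end l S \<le> x" "x \<le> right_end l S"
    by (simp_all add: level_def)
qed

lemma level_nonempty_if_left_end_le_right_end:
  "left_end l S \<le> right_end l S \<Longrightarrow> \<exists>x. (x, l) \<in> S"
  by (auto simp: left_end_def right_end_def level_def split: if_splits)

lemma Max_left_end_mem_level_Inter:
  assumes "finite P" "finite \<tau>" "\<tau> \<noteq> {}" "\<forall>i\<in>\<tau>. level_convex P (F i)"
    and ends_le: "\<And>a b. a \<in> \<tau> \<Longrightarrow> b \<in> \<tau> \<Longrightarrow> left_end l (F a) \<le> right_end l (F b)"
  shows "Max ((\<lambda>a. left_end l (F a)) ` \<tau>) \<in> (\<Inter>i\<in>\<tau>. level l (F i))"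
proof -
  have fin: "finite (F i)" if "i \<in> \<tau>" for i
    using assms(1,4) that level_convex_finite by blast
  have has_point: "\<exists>x. (x, l) \<in> F i" if "i \<in> \<tau>" for i
    using level_nonempty_if_left_end_le_right_end ends_le[OF that that] .
  obtain a0 where "a0 \<in> \<tau>" and a0_max: "Max ((\<lambda>a. left_end l (F a)) ` \<tau>) = left_end l (F a0)"
    using obtains_MAX[OF assms(2,3)] by metis
  define y where "y = left_end l (F a0)"
  have "(y, l) \<in> P"
    using level_ends(1)[OF fin] has_point \<open>a0 \<in> \<tau>\<close> assms(4) level_convex_subset
    unfolding y_def by blast
  have "y \<in> level l (F i)" if i: "i \<in> \<tau>" for i
  proof -
    have "left_end l (F i) \<le> y"
      using a0_max assms(2) i unfolding y_def by (metis Max_ge finite_imageI imageI)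
    moreover have "y \<le> right_end l (F i)"
      using ends_le \<open>a0 \<in> \<tau>\<close> i unfolding y_def by blast
    ultimately have "(y, l) \<in> F i"
      using level_ends(1,2)[OF fin[OF i]] has_point[OF i] level_convexD assms(4) i \<open>(y, l) \<in> P\<close>
      by blast
    then show ?thesis
      by (simp add: level_def)
  qed
  then show ?thesis
    using a0_max unfolding y_def by simp
qed

lemma level_Inter_empty_iff:
  assumes "finite P" "finite \<tau>" "\<tau> \<noteq> {}" "\<forall>i\<in>\<tau>. level_convex P (F i)"
  shows "(\<Inter>i\<in>\<tau>. level l (F i)) = {} \<longleftrightarrow> (\<exists>a\<in>\<tau>. \<exists>b\<in>\<tau>. right_end l (F b) < left_end l (F a))"
proof
  assume empty: "(\<Inter>i\<in>\<tau>. level l (F i)) = {}"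
  show "\<exists>a\<in>\<tau>. \<exists>b\<in>\<tau>. right_end l (F b) < left_end l (F a)"
  proof (rule ccontr)
    assume "\<not> ?thesis"
    then have "Max ((\<lambda>a. left_end l (F a)) ` \<tau>) \<in> (\<Inter>i\<in>\<tau>. level l (F i))"
      by (intro Max_left_end_mem_level_Inter[OF assms]) (meson not_less)
    then show False
      using empty by blast
  qed
next
  assume "\<exists>a\<in>\<tau>. \<exists>b\<in>\<tau>. right_end l (F b) < left_end l (F a)"
  then obtain a b where "a \<in> \<tau>" "b \<in> \<tau>" and ends: "right_end l (F b) < left_end l (F a)"
    by blast
  have "finite (F a)" "finite (F b)"
    using assms(1,4) \<open>a \<in> \<tau>\<close> \<open>b \<in> \<tau>\<close> level_convex_finite by blast+
  have "y \<notin> level l (F a) \<inter> level l (F b)" for y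
  proof
    assume "y \<in> level l (F a) \<inter> level l (F b)"
    then have "left_end l (F a) \<le> y" "y \<le> right_end l (F b)"
      using level_ends(3)[OF \<open>finite (F a)\<close>] level_ends(4)[OF \<open>finite (F b)\<close>]
      by (simp_all add: level_def)
    then show False
      using ends by linarith
  qed
  then show "(\<Inter>i\<in>\<tau>. level l (F i)) = {}"
    using \<open>a \<in> \<tau>\<close> \<open>b \<in> \<tau>\<close> by blast
qed

lemma nerve_fun_upd_Diff:
  "nerve Ix (F(A := F A - {q})) = nerve Ix F - {J. A \<in> J \<and> (\<Inter>i\<in>J. F i) \<subseteq> {q}}"
proof -
  have "(\<Inter>i\<in>J. (F(A := F A - {q})) i) = (if A \<in> J then (\<Inter>i\<in>J. F i) - {q} else (\<Inter>i\<in>J. F i))"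
    for J
    by auto
  then show ?thesis
    unfolding nerve_def by auto
qed

lemma nerve_Int_witnesses:
  assumes "finite Ix"
  obtains W where "finite W" and "nerve Ix (\<lambda>i. F i \<inter> W) = nerve Ix F"
proof
  define w where "w J = (SOME x. x \<in> (\<Inter>i\<in>J. F i))" for J
  define W where "W = w ` nerve Ix F"
  have "nerve Ix F \<subseteq> Pow Ix"
    by (auto simp: nerve_def)
  then have "finite (nerve Ix F)"
    by (rule finite_subset) (simp add: assms)
  then show "finite W"
    unfolding W_def by (rule finite_imageI)
  have witness: "w J \<in> (\<Inter>i\<in>J. F i \<inter> W)" if "J \<in> nerve Ix F" for J
  proof -
    have "\<exists>x. x \<in> (\<Inter>i\<in>J. F i)"
      using that by (auto simp: nerve_def)
    then have "w J \<in> (\<Inter>i\<in>J. F i)"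
      unfolding w_def by (rule someI_ex)
    then show ?thesis
      using that unfolding W_def by blast
  qed
  show "nerve Ix (\<lambda>i. F i \<inter> W) = nerve Ix F"
  proof (rule set_eqI)
    fix J
    show "J \<in> nerve Ix (\<lambda>i. F i \<inter> W) \<longleftrightarrow> J \<in> nerve Ix F"
    proof
      assume "J \<in> nerve Ix (\<lambda>i. F i \<inter> W)"
      then show "J \<in> nerve Ix F"
        unfolding nerve_def by blast
    next
      assume "J \<in> nerve Ix F"
      then show "J \<in> nerve Ix (\<lambda>i. F i \<inter> W)"
        using witness[of J] unfolding nerve_def by blast
    qed
  qed
qed

lemma nerve_fun_upd_Diff_left_end:
  assumes "finite P" "\<forall>i\<in>Ix. level_convex P (F i)" "A \<in> Ix"
    and "left_end j (F A) < right_end j (F A)"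
    and right_end_min: "\<And>i. i \<in> Ix \<Longrightarrow> (\<exists>x. (x, j) \<in> F i) \<Longrightarrow> right_end j (F A) \<le> right_end j (F i)"
  shows "nerve Ix (F(A := F A - {(left_end j (F A), j)})) = nerve Ix F"
proof -
  let ?q = "(left_end j (F A), j)" and ?r = "(right_end j (F A), j)"
  have fin: "finite (F i)" if "i \<in> Ix" for i
    using assms(1,2) that level_convex_finite by blast
  obtain x where "(x, j) \<in> F A"
    using level_nonempty_if_left_end_le_right_end assms(4) by fastforce
  then have "?r \<in> F A"
    using level_ends(2) fin assms(3) by blast
  then have "?r \<in> P"
    using assms(2,3) level_convex_subset by blast
  have r_mem: "?r \<in> F i" if "i \<in> Ix" "?q \<in> F i" for i
  proof (rule level_convexD[of P "F i" "left_end j (F A)" j "right_end j (F i)"])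
    show "(right_end j (F i), j) \<in> F i" "right_end j (F A) \<le> right_end j (F i)"
      using that level_ends(2) fin right_end_min by blast+
  qed (use that assms(2,4) \<open>?r \<in> P\<close> in auto)
  have "\<not> (\<Inter>i\<in>J. F i) \<subseteq> {?q}" if "J \<in> nerve Ix F" for J
  proof
    assume sub: "(\<Inter>i\<in>J. F i) \<subseteq> {?q}"
    have "J \<subseteq> Ix" "(\<Inter>i\<in>J. F i) \<noteq> {}"
      using that by (auto simp: nerve_def)
    then have "?q \<in> (\<Inter>i\<in>J. F i)"
      using sub by blast
    then have "?r \<in> (\<Inter>i\<in>J. F i)"
      using r_mem \<open>J \<subseteq> Ix\<close> by blast
    then show False
      using sub assms(4) by auto
  qed
  then show ?thesis
    using nerve_fun_upd_Diff[of Ix F A ?q] by blast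
qed

lemma Inter_subset_isolated_point_iff:
  assumes "finite P" "P \<subseteq> UNIV \<times> {1..d}" "finite J" "\<forall>i\<in>J. level_convex P (F i)"
    and "A \<in> J" "level j (F A) = {x}"
  shows "(\<Inter>i\<in>J. F i) \<subseteq> {(x, j)} \<longleftrightarrow>
    (\<forall>l\<in>{1..d} - {j}. \<exists>a\<in>J. \<exists>b\<in>J. right_end l (F b) < left_end l (F a))"
proof -
  have "F A \<subseteq> P" "J \<noteq> {}"
    using assms(4,5) level_convex_subset by blast+
  have "(\<Inter>i\<in>J. F i) \<subseteq> {(x, j)} \<longleftrightarrow> (\<forall>l\<in>{1..d} - {j}. (\<Inter>i\<in>J. level l (F i)) = {})"
  proof
    assume empty: "\<forall>l\<in>{1..d} - {j}. (\<Inter>i\<in>J. level l (F i)) = {}"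
    show "(\<Inter>i\<in>J. F i) \<subseteq> {(x, j)}"
    proof
      fix p
      assume p: "p \<in> (\<Inter>i\<in>J. F i)"
      obtain y l where [simp]: "p = (y, l)"
        by fastforce
      have yl: "(y, l) \<in> F A"
        using p assms(5) by auto
      then have "l \<in> {1..d}"
        using \<open>F A \<subseteq> P\<close> assms(2) by blast
      moreover have "y \<in> (\<Inter>i\<in>J. level l (F i))"
        using p by (auto simp: level_def)
      ultimately have "l = j"
        using empty by blast
      moreover from this have "y = x"
        using yl assms(6) by (auto simp: level_def)
      ultimately show "p \<in> {(x, j)}"
        by simp
    qed
  next
    assume "(\<Inter>i\<in>J. F i) \<subseteq> {(x, j)}"
    then show "\<forall>l\<in>{1..d} - {j}. (\<Inter>i\<in>J. level l (F i)) = {}"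
      by (auto simp: level_def)
  qed
  also have "\<dots> \<longleftrightarrow> (\<forall>l\<in>{1..d} - {j}. \<exists>a\<in>J. \<exists>b\<in>J. right_end l (F b) < left_end l (F a))"
    using level_Inter_empty_iff[OF assms(1,3) \<open>J \<noteq> {}\<close> assms(4)] by simp
  finally show ?thesis .
qed

lemma collapses_to_nerve_fun_upd_Diff_isolated:
  assumes "finite P" "P \<subseteq> UNIV \<times> {1..d}" "finite Ix" "\<forall>i\<in>Ix. level_convex P (F i)"
    and "A \<in> Ix" "level j (F A) = {x}"
  shows "collapses_to (2 * d - 1) (nerve Ix F) (nerve Ix (F(A := F A - {(x, j)})))"
proof -
  define Ps where "Ps = map (\<lambda>l. (\<lambda>i. left_end l (F i), \<lambda>i. right_end l (F i)))
    (sorted_list_of_set ({1..d} - {j}))"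
  define \<Delta> where "\<Delta> = {i\<in>Ix. (x, j) \<in> F i}"
  let ?M = "meets_and_separates [] Ps"
  have M_iff: "?M J \<longleftrightarrow> (\<Inter>i\<in>J. F i) \<subseteq> {(x, j)}" if "J \<subseteq> Ix" "A \<in> J" for J
  proof -
    have "finite J"
      using that(1) assms(3) by (rule finite_subset)
    moreover have "\<forall>i\<in>J. level_convex P (F i)"
      using that(1) assms(4) by blast
    ultimately show ?thesis
      using Inter_subset_isolated_point_iff[of P d J F A j x, OF assms(1,2) _ _ that(2) assms(6)]
      by (simp add: meets_and_separates_def Ps_def)
  qed
  have "\<tau> \<in> nerve Ix F \<and> {A} \<subseteq> \<tau> \<and> ?M \<tau> \<longleftrightarrow> {A} \<subseteq> \<tau> \<and> \<tau> \<subseteq> \<Delta> \<and> ?M \<tau>" for \<tau>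
  proof
    assume \<tau>: "\<tau> \<in> nerve Ix F \<and> {A} \<subseteq> \<tau> \<and> ?M \<tau>"
    then have "\<tau> \<subseteq> Ix" "(\<Inter>i\<in>\<tau>. F i) \<noteq> {}" "(\<Inter>i\<in>\<tau>. F i) \<subseteq> {(x, j)}"
      using M_iff by (auto simp: nerve_def)
    then show "{A} \<subseteq> \<tau> \<and> \<tau> \<subseteq> \<Delta> \<and> ?M \<tau>"
      using \<tau> unfolding \<Delta>_def by blast
  next
    assume "{A} \<subseteq> \<tau> \<and> \<tau> \<subseteq> \<Delta> \<and> ?M \<tau>"
    then show "\<tau> \<in> nerve Ix F \<and> {A} \<subseteq> \<tau> \<and> ?M \<tau>"
      unfolding \<Delta>_def nerve_def by blast
  qed
  then have in_simplex: "{\<tau>\<in>nerve Ix F. {A} \<subseteq> \<tau> \<and> ?M \<tau>} = {\<tau>. {A} \<subseteq> \<tau> \<and> \<tau> \<subseteq> \<Delta> \<and> ?M \<tau>}"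
    by blast
  have "(x, j) \<in> F A" "F A \<subseteq> P"
    using assms(4-6) level_convex_subset by (auto simp: level_def)
  then have "j \<in> {1..d}"
    using assms(2) by blast
  then have "length Ps = d - 1"
    by (simp add: Ps_def)
  then have "collapses_to (2 * d - 1) (nerve Ix F) (nerve Ix F - {\<tau>\<in>nerve Ix F. {A} \<subseteq> \<tau> \<and> ?M \<tau>})"
    using \<open>(x, j) \<in> F A\<close> \<open>j \<in> {1..d}\<close> assms(3)
    by (intro collapses_to_Diff_meets_and_separates[OF _ _ _ in_simplex]) (auto simp: \<Delta>_def)
  moreover have "nerve Ix F - {J. A \<in> J \<and> (\<Inter>i\<in>J. F i) \<subseteq> {(x, j)}}
      = nerve Ix F - {\<tau>\<in>nerve Ix F. {A} \<subseteq> \<tau> \<and> ?M \<tau>}"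
    using M_iff by (auto simp: nerve_def)
  ultimately show ?thesis
    by (simp only: nerve_fun_upd_Diff)
qed

lemma collapses_to_nerve_delete_leftmost:
  assumes "finite P" "P \<subseteq> UNIV \<times> {1..d}" "finite Ix" "\<forall>i\<in>Ix. level_convex P (F i)"
    and "A \<in> Ix" "(x, j) \<in> F A"
    and right_end_min: "\<And>i. i \<in> Ix \<Longrightarrow> (\<exists>x. (x, j) \<in> F i) \<Longrightarrow> right_end j (F A) \<le> right_end j (F i)"
  shows "collapses_to (2 * d - 1) (nerve Ix F) (nerve Ix (F(A := F A - {(left_end j (F A), j)})))"
proof (cases "left_end j (F A) < right_end j (F A)")
  case True
  then show ?thesis
    using nerve_fun_upd_Diff_left_end[OF assms(1,4,5) _ right_end_min] by simp
next
  case False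
  have fin: "finite (F A)"
    using assms(1,4,5) level_convex_finite by blast
  have "y = left_end j (F A)" if "(y, j) \<in> F A" for y
    using level_ends(3,4)[OF fin that] False by linarith
  moreover have "(left_end j (F A), j) \<in> F A"
    using level_ends(1)[OF fin assms(6)] .
  ultimately have "level j (F A) = {left_end j (F A)}"
    unfolding level_def by blast
  then show ?thesis
    by (rule collapses_to_nerve_fun_upd_Diff_isolated[OF assms(1-5)])
qed

lemma obtains_least_right_end:
  assumes "finite Ix" "i0 \<in> Ix" "(x0, j) \<in> F i0"
  obtains A x where "A \<in> Ix" "(x, j) \<in> F A"
    "\<And>i. i \<in> Ix \<Longrightarrow> (\<exists>x. (x, j) \<in> F i) \<Longrightarrow> right_end j (F A) \<le> right_end j (F i)"
proof -
  define S where "S = {i\<in>Ix. \<exists>x. (x, j) \<in> F i}"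
  have "finite S" "S \<noteq> {}"
    using assms by (auto simp: S_def)
  then obtain A where "A \<in> S" and A_min: "Min ((\<lambda>i. right_end j (F i)) ` S) = right_end j (F A)"
    by (rule obtains_MIN)
  moreover have "right_end j (F A) \<le> right_end j (F i)" if "i \<in> S" for i
    using that A_min \<open>finite S\<close> by (metis Min_le finite_imageI imageI)
  ultimately show ?thesis
    using that unfolding S_def by blast
qed

lemma collapsible_nerve_level_convex:
  assumes "finite P" "P \<subseteq> UNIV \<times> {1..d}" "finite Ix" "\<forall>i\<in>Ix. level_convex P (F i)"
  shows "collapsible (2 * d - 1) (nerve Ix F)"
  using assms(4)
proof (induction "\<Sum>i\<in>Ix. card (F i)" arbitrary: F rule: less_induct)
  case less
  have fin: "finite (F i)" if "i \<in> Ix" for i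
    using less.prems that assms(1) level_convex_finite by blast
  show ?case
  proof (cases "\<forall>i\<in>Ix. F i = {}")
    case True
    then have "nerve Ix F = {{}}"
      by (auto simp: nerve_def)
    then show ?thesis
      using collapsible_empty_face by simp
  next
    case False
    then obtain i0 x0 j where "i0 \<in> Ix" "(x0, j) \<in> F i0"
      by auto
    then obtain A x where A: "A \<in> Ix" "(x, j) \<in> F A" and right_end_min:
      "\<And>i. i \<in> Ix \<Longrightarrow> (\<exists>x. (x, j) \<in> F i) \<Longrightarrow> right_end j (F A) \<le> right_end j (F i)"
      using obtains_least_right_end[OF assms(3)] by metis
    define F' where "F' = F(A := F A - {(left_end j (F A), j)})"
    have "card (F' A) < card (F A)"
      using card_Diff1_less[OF fin[OF A(1)] level_ends(1)[OF fin[OF A(1)] A(2)]]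
      by (simp add: F'_def)
    moreover have "card (F' i) \<le> card (F i)" if "i \<in> Ix" for i
      using fin[OF that] by (simp add: F'_def card_mono)
    ultimately have "(\<Sum>i\<in>Ix. card (F' i)) < (\<Sum>i\<in>Ix. card (F i))"
      using A(1) assms(3) by (intro sum_strict_mono_ex1) auto
    moreover have "\<forall>i\<in>Ix. level_convex P (F' i)"
      using less.prems level_convex_Diff_leftmost level_ends(3)[OF fin[OF A(1)]] A(1)
      unfolding F'_def by auto
    ultimately have "collapsible (2 * d - 1) (nerve Ix F')"
      by (rule less.hyps)
    moreover have "collapses_to (2 * d - 1) (nerve Ix F) (nerve Ix F')"
      unfolding F'_def
      by (rule collapses_to_nerve_delete_leftmost[OF assms(1-3) less.prems A right_end_min])
    ultimately show ?thesis
      by (rule collapsible_if_collapses_to[rotated])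
  qed
qed

theorem theorem3:
  fixes d :: nat and P :: "(real \<times> nat) set" and \<C> :: "(real \<times> nat) set set"
  assumes "d \<ge> 1"
    and "P \<subseteq> UNIV \<times> {1..d}"
    and "finite \<C>"
    and "\<C> \<subseteq> C_equiv d P"
  shows "collapsible (2 * d - 1) (nerve \<C> id)"
proof -
  obtain W where "finite W" and W: "nerve \<C> (\<lambda>C. id C \<inter> W) = nerve \<C> id"
    using nerve_Int_witnesses[OF assms(3)] .
  have "\<forall>C\<in>\<C>. level_convex (P \<inter> W) (id C \<inter> W)"
    using assms(4) level_convex_Int[OF C_equiv_level_convex[OF assms(2)]] by auto
  then have "collapsible (2 * d - 1) (nerve \<C> (\<lambda>C. id C \<inter> W))"
    using \<open>finite W\<close> assms(2,3) by (intro collapsible_nerve_level_convex) auto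
  then show ?thesis
    using W by simp
qed

end
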